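(* Let $S_n$ be the star graph with vertex set $V=\{a_1,\dots,a_n\}$ and center $a_1$, and let $p\geq 1$. There exists $f:V\to\mathbb{R}$, not identically zero, with $\frac{\|M_{S_n}f\|_p}{\|f\|_p}=\|M_{S_n}\|_p$, such that $f(a_1)=\max_{v\in V}f(v)$ and the restriction of $f$ to $V\setminus\{a_1\}$ takes at most two values.
   Context: For a finite connected graph $G=(V,E)$ with graph distance $d_G$ and $f:V\to\mathbb{R}$, $M_Gf(v)=\sup_{r\geq 0}\frac{1}{|B(v,r)|}\sum_{u\in B(v,r)}|f(u)|$, where $B(v,r)=\{u\in V: d_G(u,v)\le r\}$. For $g:V\to\mathbb{R}$, $\|g\|_p=(\sum_{v\in V}|g(v)|^p)^{1/p}$ and $\|M_G\|_p=\sup_{f\neq 0}\|M_Gf\|_p/\|f\|_p$. The star graph $S_n$ has edges exactly between $a_1$ and each $a_i$, $i\ge 2$. *)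

theory Defs
  imports "HOL-Analysis.Analysis"
begin

definition graph_dist :: "('a \<times> 'a) set \<Rightarrow> 'a \<Rightarrow> 'a \<Rightarrow> nat" where
  "graph_dist E u v = (LEAST k. (u, v) \<in> E ^^ k)"

definition ball_G :: "'a set \<Rightarrow> ('a \<times> 'a) set \<Rightarrow> 'a \<Rightarrow> real \<Rightarrow> 'a set" where
  "ball_G V E v r = {u \<in> V. real (graph_dist E u v) \<le> r}"

definition maximal_op :: "'a set \<Rightarrow> ('a \<times> 'a) set \<Rightarrow> ('a \<Rightarrow> real) \<Rightarrow> 'a \<Rightarrow> real" where
  "maximal_op V E f v =
     (SUP r \<in> {0..}. (\<Sum>u \<in> ball_G V E v r. \<bar>f u\<bar>) / real (card (ball_G V E v r)))"

definition pnorm :: "'a set \<Rightarrow> real \<Rightarrow> ('a \<Rightarrow> real) \<Rightarrow> real" where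
  "pnorm V p g = (\<Sum>v \<in> V. \<bar>g v\<bar> powr p) powr (1 / p)"

definition maximal_op_norm :: "'a set \<Rightarrow> ('a \<times> 'a) set \<Rightarrow> real \<Rightarrow> real" where
  "maximal_op_norm V E p =
     (SUP f \<in> {f. \<exists>v \<in> V. f v \<noteq> 0}. pnorm V p (maximal_op V E f) / pnorm V p f)"

text \<open>Star graph S_n: vertices a_1..a_n represented as 1..n, center 1.\<close>

definition star_V :: "nat \<Rightarrow> nat set" where
  "star_V n = {1..n}"

definition star_E :: "nat \<Rightarrow> (nat \<times> nat) set" where
  "star_E n = {(1, i) | i. i \<in> {2..n}} \<union> {(i, 1) | i. i \<in> {2..n}}"

end

theory Submission
  imports Defs
begin

(* On the star, M f at the centre is the maximum of |f a_1| and the global mean, and at a leaf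
   a_i the maximum of |f a_i|, the average over the edge a_1 a_i and the global mean.  Hence the
   p-th power of the norm ratio is an explicit function, which does not decrease when |f| is
   taken, the largest value is moved to the centre and f is rescaled.  So it suffices to maximise
   over the compact box of profiles with value 1 at the centre and leaf values in [0, 1]; let x be
   a maximiser with ratio R = N x / D x, so N - R D is at most 0 on the box and vanishes at x.

   Call a leaf small if its maximal function is the global mean, and large otherwise.  Moving a
   single large leaf and using maximality of x, together with the tangent-line bound for the
   convex mean term of the small leaves, shows that all large values maximise one and the same
   function of one variable; so they can all be raised to the largest of them without lowering
   the ratio, and the small leaves stay small.  Finally, replacing the values at the small leaves
   by their average keeps the mean and, by Jensen, does not increase the denominator. *)

lemma sum_atLeastAtMost_split_first:
  "(n::nat) \<ge> 1 \<Longrightarrow> (\<Sum>i=1..n. g i) = g 1 + (\<Sum>i=2..n. g i)"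
  by (simp add: sum.atLeast_Suc_atMost numeral_2_eq_2)

lemma SUP_nonneg_step2:
  fixes a b :: real
  shows "(SUP r::real\<in>{0..}. if r < 1 then a else b) = max a b"
proof -
  let ?h = "\<lambda>r::real. if r < 1 then a else b"
  have img: "?h ` {0..} = {a, b}"
    using image_eqI[of a ?h 0 "{0..}"] image_eqI[of b ?h 1 "{0..}"] by auto
  show ?thesis by (simp only: img) (simp add: cSup_insert_If sup_max)
qed

lemma SUP_nonneg_step3:
  fixes a b c :: real
  shows "(SUP r::real\<in>{0..}. if r < 1 then a else if r < 2 then b else c) = max a (max b c)"
proof -
  let ?h = "\<lambda>r::real. if r < 1 then a else if r < 2 then b else c"
  have img: "?h ` {0..} = {a, b, c}"
    using image_eqI[of a ?h 0 "{0..}"] image_eqI[of b ?h 1 "{0..}"] image_eqI[of c ?h 2 "{0..}"]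
    by auto
  show ?thesis by (simp only: img) (simp add: cSup_insert_If sup_max)
qed

lemma powr_tangent_le:
  fixes a b p :: real
  assumes "p \<ge> 1" "a > 0" "b > 0"
  shows "a powr p + p * a powr (p - 1) * (b - a) \<le> b powr p"
proof -
  have "((\<lambda>x. x powr p) has_field_derivative p * a powr (p - 1)) (at a within {0<..})"
    using has_real_derivative_powr[OF assms(2), of p] by (rule has_field_derivative_at_within)
  then have "p * a powr (p - 1) * (b - a) \<le> b powr p - a powr p"
    using convex_on_imp_above_tangent[OF powr_convex[OF assms(1)]] assms
    by (auto simp: convex_connected interior_open)
  then show ?thesis by simp
qed

lemma powr_convex_nonneg:
  assumes "p \<ge> 1"
  shows "convex_on {0..} (\<lambda>x::real. x powr p)"
proof (rule convex_onI)
  fix t x y :: real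
  assume t: "0 < t" "t < 1" and xy: "x \<in> {0..}" "y \<in> {0..}"
  have contract: "s powr p \<le> s" if "0 < s" "s \<le> 1" for s :: real
    using powr_le_one_le[OF that assms] .
  show "((1 - t) *\<^sub>R x + t *\<^sub>R y) powr p \<le> (1 - t) * x powr p + t * y powr p"
  proof (cases "x = 0 \<or> y = 0")
    case True
    then show ?thesis
      using t xy contract[of t] contract[of "1 - t"] by (auto simp: powr_mult mult_right_mono)
  next
    case False
    then show ?thesis using xy t convex_onD[OF powr_convex[OF assms], of t x y] by auto
  qed
qed simp

lemma card_mult_powr_mean_le_sum_powr:
  assumes "finite S" "\<And>i. i \<in> S \<Longrightarrow> x i \<ge> 0" "p \<ge> 1"
  shows "real (card S) * ((\<Sum>i\<in>S. x i) / real (card S)) powr p \<le> (\<Sum>i\<in>S. x i powr p)"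
proof (cases "S = {}")
  case False
  then have c: "real (card S) > 0" using assms(1) by (simp add: card_gt_0_iff)
  have "(\<lambda>x. x powr p) (\<Sum>i\<in>S. (1 / real (card S)) *\<^sub>R x i)
      \<le> (\<Sum>i\<in>S. (1 / real (card S)) * x i powr p)"
    by (rule convex_on_sum[OF assms(1) False powr_convex_nonneg[OF assms(3)]]) (use assms c in auto)
  then have "((\<Sum>i\<in>S. x i) / real (card S)) powr p \<le> (\<Sum>i\<in>S. x i powr p) / real (card S)"
    by (simp add: sum_distrib_left[symmetric] sum_distrib_right[symmetric] divide_inverse mult.commute)
  then show ?thesis using c by (simp add: field_simps)
qed simp

lemma maximal_op_norm_eqI:
  assumes "\<exists>v\<in>V. g v \<noteq> 0"
    and "\<And>f. \<exists>v\<in>V. f v \<noteq> 0 \<Longrightarrow>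
      pnorm V p (maximal_op V E f) / pnorm V p f \<le> pnorm V p (maximal_op V E g) / pnorm V p g"
  shows "maximal_op_norm V E p = pnorm V p (maximal_op V E g) / pnorm V p g"
  unfolding maximal_op_norm_def using assms by (intro cSup_eq_maximum) auto

section \<open>The maximal function on the star\<close>

lemma star_E_iff: "(u, v) \<in> star_E n \<longleftrightarrow> (u = 1 \<and> v \<in> {2..n}) \<or> (v = 1 \<and> u \<in> {2..n})"
  unfolding star_E_def by auto

lemma graph_dist_star:
  assumes "u \<in> star_V n" "v \<in> star_V n"
  shows "graph_dist (star_E n) u v = (if u = v then 0 else if u = 1 \<or> v = 1 then 1 else 2)"
proof -
  consider "u = v" | "u \<noteq> v" "u = 1 \<or> v = 1" | "u \<noteq> v" "u \<noteq> 1" "v \<noteq> 1" by blast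
  then show ?thesis
  proof cases
    case 1
    then show ?thesis unfolding graph_dist_def by (intro Least_equality) auto
  next
    case 2
    have "(u, v) \<in> star_E n ^^ 1" using 2 assms by (auto simp: star_V_def star_E_iff)
    moreover have "1 \<le> m" if "(u, v) \<in> star_E n ^^ m" for m
      using that 2 by (cases m) auto
    ultimately show ?thesis using 2 unfolding graph_dist_def by (auto intro: Least_equality)
  next
    case 3
    have "(u, 1) \<in> star_E n" "(1, v) \<in> star_E n" using 3 assms by (auto simp: star_V_def star_E_iff)
    then have "(u, v) \<in> star_E n ^^ 2" by (auto simp: numeral_2_eq_2)
    moreover have "2 \<le> m" if "(u, v) \<in> star_E n ^^ m" for m
    proof (rule ccontr)
      assume "\<not> 2 \<le> m"
      then have "m = 0 \<or> m = 1" by auto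
      then show False using that 3 by (auto simp: star_E_iff)
    qed
    ultimately show ?thesis using 3 unfolding graph_dist_def by (auto intro: Least_equality)
  qed
qed

lemma ball_star_center:
  assumes "n \<ge> 1" "r \<ge> 0"
  shows "ball_G (star_V n) (star_E n) 1 r = (if r < 1 then {1} else star_V n)"
  using assms by (auto simp: ball_G_def graph_dist_star star_V_def split: if_splits)

lemma ball_star_leaf:
  assumes "i \<in> {2..n}" "r \<ge> 0"
  shows "ball_G (star_V n) (star_E n) i r = (if r < 1 then {i} else if r < 2 then {1, i} else star_V n)"
  using assms by (auto simp: ball_G_def graph_dist_star star_V_def split: if_splits)

definition star_mean :: "nat \<Rightarrow> (nat \<Rightarrow> real) \<Rightarrow> real" where
  "star_mean n f = (\<Sum>i=1..n. \<bar>f i\<bar>) / real n"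

definition star_max_center :: "nat \<Rightarrow> (nat \<Rightarrow> real) \<Rightarrow> real" where
  "star_max_center n f = max \<bar>f 1\<bar> (star_mean n f)"

definition star_max_leaf :: "nat \<Rightarrow> (nat \<Rightarrow> real) \<Rightarrow> nat \<Rightarrow> real" where
  "star_max_leaf n f i = max \<bar>f i\<bar> (max ((\<bar>f 1\<bar> + \<bar>f i\<bar>) / 2) (star_mean n f))"

lemma ball_average_star_V:
  "(\<Sum>u\<in>star_V n. \<bar>f u\<bar>) / real (card (star_V n)) = star_mean n f"
  by (simp add: star_mean_def star_V_def)

lemma maximal_op_star_center:
  assumes "n \<ge> 1"
  shows "maximal_op (star_V n) (star_E n) f 1 = star_max_center n f"
proof -
  have "maximal_op (star_V n) (star_E n) f 1
      = (SUP r::real\<in>{0..}. if r < 1 then \<bar>f 1\<bar> else star_mean n f)"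
    unfolding maximal_op_def
  proof (rule SUP_cong)
    fix r :: real assume "r \<in> {0..}"
    then show "(\<Sum>u\<in>ball_G (star_V n) (star_E n) 1 r. \<bar>f u\<bar>)
        / real (card (ball_G (star_V n) (star_E n) 1 r))
        = (if r < 1 then \<bar>f 1\<bar> else star_mean n f)"
      using ball_star_center[OF assms] by (simp add: ball_average_star_V)
  qed simp
  also have "\<dots> = star_max_center n f"
    unfolding star_max_center_def by (rule SUP_nonneg_step2)
  finally show ?thesis .
qed

lemma maximal_op_star_leaf:
  assumes "i \<in> {2..n}"
  shows "maximal_op (star_V n) (star_E n) f i = star_max_leaf n f i"
proof -
  have "maximal_op (star_V n) (star_E n) f i = (SUP r::real\<in>{0..}.
      if r < 1 then \<bar>f i\<bar> else if r < 2 then (\<bar>f 1\<bar> + \<bar>f i\<bar>) / 2 else star_mean n f)"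
    unfolding maximal_op_def
  proof (rule SUP_cong)
    fix r :: real assume "r \<in> {0..}"
    then show "(\<Sum>u\<in>ball_G (star_V n) (star_E n) i r. \<bar>f u\<bar>)
        / real (card (ball_G (star_V n) (star_E n) i r))
        = (if r < 1 then \<bar>f i\<bar> else if r < 2 then (\<bar>f 1\<bar> + \<bar>f i\<bar>) / 2 else star_mean n f)"
      using ball_star_leaf[OF assms] assms by (simp add: ball_average_star_V)
  qed simp
  also have "\<dots> = star_max_leaf n f i"
    unfolding star_max_leaf_def by (rule SUP_nonneg_step3)
  finally show ?thesis .
qed

definition star_num :: "nat \<Rightarrow> real \<Rightarrow> (nat \<Rightarrow> real) \<Rightarrow> real" where
  "star_num n p f = star_max_center n f powr p + (\<Sum>i=2..n. star_max_leaf n f i powr p)"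

definition star_den :: "nat \<Rightarrow> real \<Rightarrow> (nat \<Rightarrow> real) \<Rightarrow> real" where
  "star_den n p f = (\<Sum>i=1..n. \<bar>f i\<bar> powr p)"

definition star_ratio :: "nat \<Rightarrow> real \<Rightarrow> (nat \<Rightarrow> real) \<Rightarrow> real" where
  "star_ratio n p f = star_num n p f / star_den n p f"

lemma star_num_nonneg: "0 \<le> star_num n p f"
  unfolding star_num_def by (intro add_nonneg_nonneg sum_nonneg) auto

lemma star_den_nonneg: "0 \<le> star_den n p f"
  unfolding star_den_def by (intro sum_nonneg) auto

lemma star_ratio_nonneg: "0 \<le> star_ratio n p f"
  unfolding star_ratio_def using star_num_nonneg star_den_nonneg by (rule divide_nonneg_nonneg)

lemma pnorm_ratio_star:
  assumes "n \<ge> 1" "p > 0"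
  shows "pnorm (star_V n) p (maximal_op (star_V n) (star_E n) f) / pnorm (star_V n) p f
    = star_ratio n p f powr (1 / p)"
proof -
  have "(\<Sum>v\<in>star_V n. \<bar>maximal_op (star_V n) (star_E n) f v\<bar> powr p)
      = \<bar>maximal_op (star_V n) (star_E n) f 1\<bar> powr p
        + (\<Sum>i=2..n. \<bar>maximal_op (star_V n) (star_E n) f i\<bar> powr p)"
    unfolding star_V_def using assms(1) by (rule sum_atLeastAtMost_split_first)
  also have "\<dots> = star_num n p f"
  proof -
    have "\<bar>maximal_op (star_V n) (star_E n) f 1\<bar> = star_max_center n f"
      using maximal_op_star_center[OF assms(1)] by (simp add: star_max_center_def)
    moreover have "\<bar>maximal_op (star_V n) (star_E n) f i\<bar> = star_max_leaf n f i" if "i \<in> {2..n}" for i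
      using maximal_op_star_leaf[OF that] by (simp add: star_max_leaf_def)
    ultimately show ?thesis unfolding star_num_def by simp
  qed
  finally show ?thesis
    by (simp add: pnorm_def star_ratio_def star_den_def star_V_def powr_divide)
qed

section \<open>Reduction to normalised profiles\<close>

lemma star_ratio_rescale:
  assumes "n \<ge> 1" "c > 0"
  shows "star_ratio n p (\<lambda>i. if i \<in> {1..n} then c * \<bar>g i\<bar> else 0) = star_ratio n p g"
    (is "star_ratio n p ?y = _")
proof -
  have y: "\<bar>?y i\<bar> = c * \<bar>g i\<bar>" if "i \<in> {1..n}" for i
    using that assms(2) by (simp add: abs_mult)
  have y1: "\<bar>?y 1\<bar> = c * \<bar>g 1\<bar>" using y assms(1) by simp
  have "(\<Sum>i=1..n. \<bar>?y i\<bar>) = (\<Sum>i=1..n. c * \<bar>g i\<bar>)"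
    by (intro sum.cong refl y)
  then have mean: "star_mean n ?y = c * star_mean n g"
    unfolding star_mean_def by (simp add: sum_distrib_left)
  have "star_max_center n ?y = c * star_max_center n g"
    unfolding star_max_center_def mean y1 using assms(2) by (simp add: max_mult_distrib_left)
  moreover have "star_max_leaf n ?y i = c * star_max_leaf n g i" if "i \<in> {2..n}" for i
    using that assms(2) unfolding star_max_leaf_def mean y1
    by (simp add: y max_mult_distrib_left distrib_left[symmetric])
  ultimately have "star_num n p ?y = c powr p * star_num n p g"
    unfolding star_num_def using assms(2)
    by (simp add: powr_mult sum_distrib_left distrib_left)
  moreover have "(\<Sum>i=1..n. \<bar>?y i\<bar> powr p) = (\<Sum>i=1..n. c powr p * \<bar>g i\<bar> powr p)"
    using assms(2) by (intro sum.cong) (simp_all add: y powr_mult)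
  then have "star_den n p ?y = c powr p * star_den n p g"
    unfolding star_den_def by (simp add: sum_distrib_left)
  ultimately show ?thesis unfolding star_ratio_def using assms(2) by simp
qed

lemma star_ratio_le_transpose:
  assumes j: "j \<in> {1..n}" and largest: "\<And>i. i \<in> {1..n} \<Longrightarrow> \<bar>g i\<bar> \<le> \<bar>g j\<bar>" and "p > 0"
  shows "star_ratio n p g \<le> star_ratio n p (g \<circ> Transposition.transpose 1 j)"
proof (cases "j = 1")
  case False
  let ?b = "g \<circ> Transposition.transpose 1 j"
  have "bij_betw (Transposition.transpose 1 j) {1..n} {1..n}"
    using j by (intro bij_betw_transpose_iff) auto
  then have reindex: "(\<Sum>i=1..n. h (?b i)) = (\<Sum>i=1..n. h (g i))" for h :: "real \<Rightarrow> real"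
    using sum.reindex_bij_betw[of _ "{1..n}" "{1..n}" "\<lambda>i. h (g i)"] by simp
  have den: "star_den n p ?b = star_den n p g"
    unfolding star_den_def by (rule reindex)
  have mean: "star_mean n ?b = star_mean n g"
    unfolding star_mean_def using reindex[of abs] by simp
  have g1: "\<bar>g 1\<bar> \<le> \<bar>g j\<bar>" using largest j by simp
  have j2: "j \<in> {2..n}" using j False by auto
  have b: "?b 1 = g j" "?b j = g 1" "\<And>i. i \<noteq> 1 \<Longrightarrow> i \<noteq> j \<Longrightarrow> ?b i = g i"
    by (simp_all add: Transposition.transpose_def)
  have center: "star_max_center n g \<le> star_max_leaf n ?b j"
    unfolding star_max_center_def star_max_leaf_def mean b by linarith
  have leaf_j: "star_max_leaf n g j \<le> star_max_center n ?b"
    unfolding star_max_center_def star_max_leaf_def mean b using g1 by (simp add: max_def)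
  have leaf: "star_max_leaf n g i \<le> star_max_leaf n ?b i" if "i \<in> {2..n} - {j}" for i
  proof -
    have "?b i = g i" using that by (intro b(3)) auto
    then show ?thesis unfolding star_max_leaf_def mean b(1) using g1 by (simp add: max_def)
  qed
  have "star_max_center n g powr p + star_max_leaf n g j powr p
      + (\<Sum>i\<in>{2..n} - {j}. star_max_leaf n g i powr p)
      \<le> star_max_leaf n ?b j powr p + star_max_center n ?b powr p
      + (\<Sum>i\<in>{2..n} - {j}. star_max_leaf n ?b i powr p)"
  proof (intro add_mono sum_mono)
    show "star_max_center n g powr p \<le> star_max_leaf n ?b j powr p"
      using center \<open>p > 0\<close> by (intro powr_mono2) (auto simp: star_max_center_def)
    show "star_max_leaf n g j powr p \<le> star_max_center n ?b powr p"
      using leaf_j \<open>p > 0\<close> by (intro powr_mono2) (auto simp: star_max_leaf_def)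
    show "star_max_leaf n g i powr p \<le> star_max_leaf n ?b i powr p" if "i \<in> {2..n} - {j}" for i
      using leaf[OF that] \<open>p > 0\<close> by (intro powr_mono2) (auto simp: star_max_leaf_def)
  qed
  then have "star_num n p g \<le> star_num n p ?b"
    unfolding star_num_def sum.remove[OF finite_atLeastAtMost j2] by simp
  then show ?thesis
    unfolding star_ratio_def den using star_den_nonneg by (rule divide_right_mono)
qed simp

(* Vanishing outside {1..n} makes no difference to star_ratio, but makes the box compact in the
   product topology of nat \<Rightarrow> real. *)
definition star_box :: "nat \<Rightarrow> (nat \<Rightarrow> real) set" where
  "star_box n = {x. x 1 = 1 \<and> (\<forall>i\<in>{2..n}. 0 \<le> x i \<and> x i \<le> 1)
     \<and> (\<forall>i. i \<notin> {1..n} \<longrightarrow> x i = 0)}"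

lemma star_box_center: "x \<in> star_box n \<Longrightarrow> x 1 = 1"
  by (simp add: star_box_def)

lemma star_box_leaf: "x \<in> star_box n \<Longrightarrow> i \<in> {2..n} \<Longrightarrow> 0 \<le> x i \<and> x i \<le> 1"
  by (simp add: star_box_def)

lemma star_ratio_le_box:
  assumes "n \<ge> 1" "p > 0" and nonzero: "\<exists>v\<in>star_V n. f v \<noteq> 0"
  shows "\<exists>y\<in>star_box n. star_ratio n p f \<le> star_ratio n p y"
proof -
  have "Max ((\<lambda>i. \<bar>f i\<bar>) ` {1..n}) \<in> (\<lambda>i. \<bar>f i\<bar>) ` {1..n}"
    using assms(1) by (intro Max_in) auto
  then obtain j where j: "j \<in> {1..n}" "\<bar>f j\<bar> = Max ((\<lambda>i. \<bar>f i\<bar>) ` {1..n})"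
    by auto
  then have largest: "\<bar>f i\<bar> \<le> \<bar>f j\<bar>" if "i \<in> {1..n}" for i
    using that by simp
  then have "\<bar>f j\<bar> > 0" using nonzero by (force simp: star_V_def)
  define g where "g = f \<circ> Transposition.transpose 1 j"
  define y where "y i = (if i \<in> {1..n} then (1 / \<bar>f j\<bar>) * \<bar>g i\<bar> else 0)" for i
  have "star_ratio n p f \<le> star_ratio n p g"
    unfolding g_def using j(1) largest assms(2) by (rule star_ratio_le_transpose)
  also have "\<dots> = star_ratio n p y"
    unfolding y_def using star_ratio_rescale[OF assms(1)] \<open>\<bar>f j\<bar> > 0\<close> by simp
  finally have "star_ratio n p f \<le> star_ratio n p y" .
  moreover have "y \<in> star_box n"
  proof -
    have "\<bar>g i\<bar> \<le> \<bar>f j\<bar>" if "i \<in> {1..n}" for i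
      using that j(1) largest by (auto simp: g_def Transposition.transpose_def)
    moreover have "g 1 = f j" by (simp add: g_def)
    ultimately show ?thesis
      using \<open>\<bar>f j\<bar> > 0\<close> assms(1) unfolding star_box_def y_def by auto
  qed
  ultimately show ?thesis by blast
qed

lemma compact_star_box:
  assumes "n \<ge> 1"
  shows "compact (star_box n)"
proof -
  have "star_box n = PiE UNIV (\<lambda>i. if i = 1 then {1} else if i \<in> {2..n} then {0..1} else {0})"
  proof (intro set_eqI iffI)
    fix x assume x: "x \<in> star_box n"
    show "x \<in> PiE UNIV (\<lambda>i. if i = 1 then {1} else if i \<in> {2..n} then {0..1} else {0})"
      unfolding PiE_UNIV_domain
    proof (intro Pi_I)
      fix i :: nat
      consider "i = 1" | "i \<in> {2..n}" | "i \<notin> {1..n}" by fastforce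
      then show "x i \<in> (if i = 1 then {1} else if i \<in> {2..n} then {0..1} else {0})"
        using x by cases (auto simp: star_box_def)
    qed
  next
    fix x assume "x \<in> PiE UNIV (\<lambda>i. if i = 1 then {1} else if i \<in> {2..n} then {0..1::real} else {0})"
    then have x: "x i \<in> (if i = 1 then {1} else if i \<in> {2..n} then {0..1} else {0})" for i
      unfolding PiE_UNIV_domain by blast
    have "x 1 = 1" using x[of 1] by simp
    moreover have "0 \<le> x i \<and> x i \<le> 1" if "i \<in> {2..n}" for i using x[of i] that by auto
    moreover have "x i = 0" if "i \<notin> {1..n}" for i using x[of i] that assms by auto
    ultimately show "x \<in> star_box n" unfolding star_box_def by blast
  qed
  moreover have "compactin (product_topology (\<lambda>i. euclidean) UNIV)
      (PiE UNIV (\<lambda>i. if i = 1 then {1} else if i \<in> {2..n} then {0..1::real} else {0}))"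
    by (subst compactin_PiE) auto
  ultimately show ?thesis by (simp add: euclidean_product_topology)
qed

lemma star_mean_box:
  assumes "n \<ge> 1" "x \<in> star_box n"
  shows "star_mean n x = (1 + (\<Sum>i=2..n. x i)) / real n"
proof -
  have "(\<Sum>i=2..n. \<bar>x i\<bar>) = (\<Sum>i=2..n. x i)"
    using star_box_leaf[OF assms(2)] by (intro sum.cong) auto
  then show ?thesis
    unfolding star_mean_def sum_atLeastAtMost_split_first[OF assms(1)] star_box_center[OF assms(2)]
    by simp
qed

lemma star_mean_box_bounds:
  assumes "n \<ge> 1" "x \<in> star_box n"
  shows "0 < star_mean n x" "star_mean n x \<le> 1"
proof -
  have "0 \<le> (\<Sum>i=2..n. x i)"
    using star_box_leaf[OF assms(2)] by (intro sum_nonneg) auto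
  moreover have "(\<Sum>i=2..n. x i) \<le> (\<Sum>i=2..n. 1)"
    using star_box_leaf[OF assms(2)] by (intro sum_mono) auto
  moreover have "(\<Sum>i=2..n. 1::real) = real n - 1" using assms(1) by simp
  ultimately show "0 < star_mean n x" "star_mean n x \<le> 1"
    using assms(1) by (simp_all add: star_mean_box[OF assms])
qed

lemma star_num_box:
  assumes "n \<ge> 1" "x \<in> star_box n"
  shows "star_num n p x = 1 + (\<Sum>i=2..n. max ((1 + x i) / 2) (star_mean n x) powr p)"
proof -
  have "star_max_center n x = 1"
    using star_mean_box_bounds[OF assms]
    unfolding star_max_center_def star_box_center[OF assms(2)] by simp
  moreover have "star_max_leaf n x i = max ((1 + x i) / 2) (star_mean n x)" if "i \<in> {2..n}" for i
    using star_box_leaf[OF assms(2) that]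
    unfolding star_max_leaf_def star_box_center[OF assms(2)] by (simp add: max_def)
  ultimately show ?thesis by (simp add: star_num_def)
qed

lemma star_den_box:
  assumes "n \<ge> 1" "x \<in> star_box n"
  shows "star_den n p x = 1 + (\<Sum>i=2..n. x i powr p)"
proof -
  have "(\<Sum>i=2..n. \<bar>x i\<bar> powr p) = (\<Sum>i=2..n. x i powr p)"
    using star_box_leaf[OF assms(2)] by (intro sum.cong) auto
  then show ?thesis
    unfolding star_den_def sum_atLeastAtMost_split_first[OF assms(1)] star_box_center[OF assms(2)]
    by simp
qed

lemma star_den_box_ge_one:
  assumes "n \<ge> 1" "x \<in> star_box n"
  shows "star_den n p x \<ge> 1"
  unfolding star_den_box[OF assms] by (simp add: sum_nonneg)

lemma continuous_on_star_ratio: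
  assumes "n \<ge> 1" "p > 0"
  shows "continuous_on (star_box n) (star_ratio n p)"
proof -
  have coord: "continuous_on (star_box n) (\<lambda>x. x i)" for i
    by (rule continuous_on_subset[OF continuous_on_product_coordinates]) auto
  have mean: "continuous_on (star_box n) (star_mean n)"
    unfolding star_mean_def by (intro continuous_intros coord) (use assms in auto)
  have num: "continuous_on (star_box n) (star_num n p)"
    unfolding star_num_def star_max_center_def star_max_leaf_def
    by (intro continuous_intros continuous_on_powr' coord mean) (use assms in \<open>auto simp: star_mean_def\<close>)
  have den: "continuous_on (star_box n) (star_den n p)"
    unfolding star_den_def by (intro continuous_intros continuous_on_powr' coord) (use assms in auto)
  have "continuous_on (star_box n) (\<lambda>x. star_num n p x / star_den n p x)"
    using star_den_box_ge_one[OF assms(1), of _ p] by (intro continuous_on_divide num den) force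
  then show ?thesis unfolding star_ratio_def[abs_def] .
qed

section \<open>Improving a maximiser\<close>

(* On the box the maximal function at leaf i is max ((1 + x i) / 2) (star_mean n x); a leaf is
   small if the mean attains this maximum. *)
definition small_leaves :: "nat \<Rightarrow> (nat \<Rightarrow> real) \<Rightarrow> nat set" where
  "small_leaves n x = {i\<in>{2..n}. (1 + x i) / 2 \<le> star_mean n x}"

definition large_leaves :: "nat \<Rightarrow> (nat \<Rightarrow> real) \<Rightarrow> nat set" where
  "large_leaves n x = {i\<in>{2..n}. star_mean n x < (1 + x i) / 2}"

(* The first-order effect on star_num - R * star_den of giving a large leaf the value y: its own
   terms, plus the tangent-line bound p A^(p-1) (A' - A) for the term A^p of every small leaf,
   the mean changing by y / n. *)
definition leaf_gain :: "nat \<Rightarrow> real \<Rightarrow> real \<Rightarrow> (nat \<Rightarrow> real) \<Rightarrow> real \<Rightarrow> real" where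
  "leaf_gain n p R x y = ((1 + y) / 2) powr p - R * y powr p
     + real (card (small_leaves n x)) * p * star_mean n x powr (p - 1) / real n * y"

lemma sum_leaves_split:
  "(\<Sum>i=2..n. g i) = (\<Sum>i\<in>large_leaves n x. g i) + (\<Sum>i\<in>small_leaves n x. g i)"
proof -
  have partition: "{2..n} = large_leaves n x \<union> small_leaves n x"
    by (auto simp: large_leaves_def small_leaves_def)
  have "finite (large_leaves n x)" "finite (small_leaves n x)"
    "large_leaves n x \<inter> small_leaves n x = {}"
    by (auto simp: large_leaves_def small_leaves_def)
  then show ?thesis by (simp only: partition sum.union_disjoint)
qed

lemma star_num_den_perturb_large_leaves:
  assumes n: "n \<ge> 1" and p: "p \<ge> 1" and x: "x \<in> star_box n" and x': "x' \<in> star_box n"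
    and small: "\<And>i. i \<in> small_leaves n x \<Longrightarrow> x' i = x i"
  shows "star_num n p x - R * star_den n p x
      + (\<Sum>i\<in>large_leaves n x. leaf_gain n p R x (x' i) - leaf_gain n p R x (x i))
    \<le> star_num n p x' - R * star_den n p x'"
proof -
  let ?L = "large_leaves n x" and ?S = "small_leaves n x"
  let ?A = "star_mean n x" and ?A' = "star_mean n x'"
  let ?h = "\<lambda>y. ((1 + y) / 2) powr p"
  let ?M = "\<lambda>x i. max ((1 + x i) / 2) (star_mean n x) powr p"
  have unchanged: "(\<Sum>i\<in>?S. g (x' i)) = (\<Sum>i\<in>?S. g (x i))" for g :: "real \<Rightarrow> real"
    by (intro sum.cong) (simp_all add: small)
  have mean: "?A' - ?A = (\<Sum>i\<in>?L. x' i - x i) / real n"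
    unfolding star_mean_box[OF n x] star_mean_box[OF n x'] sum_leaves_split[where x = x]
    using unchanged[of "\<lambda>t. t"] by (simp add: sum_subtractf diff_divide_distrib add_divide_distrib)
  have den: "star_den n p x' - star_den n p x = (\<Sum>i\<in>?L. x' i powr p - x i powr p)"
    unfolding star_den_box[OF n x] star_den_box[OF n x'] sum_leaves_split[where x = x]
    using unchanged[of "\<lambda>t. t powr p"] by (simp add: sum_subtractf)
  have large: "?h (x' i) - ?h (x i) \<le> ?M x' i - ?M x i" if "i \<in> ?L" for i
  proof -
    have "?M x i = ?h (x i)" using that by (simp add: large_leaves_def)
    moreover have "?h (x' i) \<le> ?M x' i"
      using star_box_leaf[OF x'] that p by (intro powr_mono2) (auto simp: large_leaves_def)
    ultimately show ?thesis by simp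
  qed
  have small_leaf: "p * ?A powr (p - 1) * (?A' - ?A) \<le> ?M x' i - ?M x i" if "i \<in> ?S" for i
  proof -
    have "?M x i = ?A powr p" using that by (simp add: small_leaves_def)
    moreover have "?A powr p + p * ?A powr (p - 1) * (?A' - ?A) \<le> ?A' powr p"
      using star_mean_box_bounds[OF n x] star_mean_box_bounds[OF n x'] p by (intro powr_tangent_le) auto
    moreover have "?A' powr p \<le> ?M x' i"
      using star_mean_box_bounds[OF n x'] p by (intro powr_mono2) auto
    ultimately show ?thesis by simp
  qed
  have "(\<Sum>i\<in>?L. ?h (x' i) - ?h (x i)) + real (card ?S) * (p * ?A powr (p - 1) * (?A' - ?A))
      \<le> (\<Sum>i\<in>?L. ?M x' i - ?M x i) + (\<Sum>i\<in>?S. ?M x' i - ?M x i)"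
  proof (rule add_mono)
    show "(\<Sum>i\<in>?L. ?h (x' i) - ?h (x i)) \<le> (\<Sum>i\<in>?L. ?M x' i - ?M x i)"
      using large by (rule sum_mono)
    have "real (card ?S) * (p * ?A powr (p - 1) * (?A' - ?A)) = (\<Sum>i\<in>?S. p * ?A powr (p - 1) * (?A' - ?A))"
      by simp
    also have "\<dots> \<le> (\<Sum>i\<in>?S. ?M x' i - ?M x i)"
      using small_leaf by (rule sum_mono)
    finally show "real (card ?S) * (p * ?A powr (p - 1) * (?A' - ?A)) \<le> (\<Sum>i\<in>?S. ?M x' i - ?M x i)" .
  qed
  also have "\<dots> = star_num n p x' - star_num n p x"
    unfolding star_num_box[OF n x] star_num_box[OF n x'] sum_leaves_split[where x = x]
    by (simp add: sum_subtractf)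
  finally have num: "(\<Sum>i\<in>?L. ?h (x' i) - ?h (x i)) + real (card ?S) * (p * ?A powr (p - 1) * (?A' - ?A))
      \<le> star_num n p x' - star_num n p x" .
  let ?c = "real (card ?S) * p * ?A powr (p - 1) / real n"
  have "(\<Sum>i\<in>?L. leaf_gain n p R x (x' i) - leaf_gain n p R x (x i))
      = (\<Sum>i\<in>?L. (?h (x' i) - ?h (x i)) - R * (x' i powr p - x i powr p) + ?c * (x' i - x i))"
    by (intro sum.cong refl) (unfold leaf_gain_def right_diff_distrib, linarith)
  also have "\<dots> = (\<Sum>i\<in>?L. ?h (x' i) - ?h (x i)) - R * (\<Sum>i\<in>?L. x' i powr p - x i powr p)
      + ?c * (\<Sum>i\<in>?L. x' i - x i)"
    by (simp add: sum.distrib sum_subtractf sum_distrib_left[symmetric] sum_divide_distrib[symmetric])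
  also have "?c * (\<Sum>i\<in>?L. x' i - x i) = real (card ?S) * (p * ?A powr (p - 1) * (?A' - ?A))"
    unfolding mean by simp
  finally have "(\<Sum>i\<in>?L. leaf_gain n p R x (x' i) - leaf_gain n p R x (x i))
      = (\<Sum>i\<in>?L. ?h (x' i) - ?h (x i)) - R * (\<Sum>i\<in>?L. x' i powr p - x i powr p)
        + real (card ?S) * (p * ?A powr (p - 1) * (?A' - ?A))" .
  then show ?thesis using num den by (simp add: algebra_simps)
qed

lemma star_ratio_le_iff:
  assumes "n \<ge> 1" "y \<in> star_box n"
  shows "star_ratio n p y \<le> R \<longleftrightarrow> star_num n p y - R * star_den n p y \<le> 0"
  using star_den_box_ge_one[OF assms, of p] by (simp add: star_ratio_def pos_divide_le_eq)

lemma star_ratio_ge_iff: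
  assumes "n \<ge> 1" "y \<in> star_box n"
  shows "R \<le> star_ratio n p y \<longleftrightarrow> 0 \<le> star_num n p y - R * star_den n p y"
  using star_den_box_ge_one[OF assms, of p] by (simp add: star_ratio_def pos_le_divide_eq)

lemma leaf_gain_max_at_large_leaf:
  assumes n: "n \<ge> 1" and p: "p \<ge> 1" and x: "x \<in> star_box n"
    and maximal: "\<And>y. y \<in> star_box n \<Longrightarrow> star_ratio n p y \<le> star_ratio n p x"
    and j: "j \<in> large_leaves n x" and t: "0 \<le> t" "t \<le> 1"
  shows "leaf_gain n p (star_ratio n p x) x t \<le> leaf_gain n p (star_ratio n p x) x (x j)"
proof -
  let ?R = "star_ratio n p x" and ?G = "leaf_gain n p (star_ratio n p x) x"
  define x' where "x' = x(j := t)"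
  have j2: "j \<in> {2..n}" using j by (simp add: large_leaves_def)
  have x': "x' \<in> star_box n" using x j2 t by (auto simp: star_box_def x'_def)
  have "?G (x' i) - ?G (x i) = (if i = j then ?G t - ?G (x j) else 0)" for i
    by (simp add: x'_def)
  then have "(\<Sum>i\<in>large_leaves n x. ?G (x' i) - ?G (x i)) = ?G t - ?G (x j)"
    using j by (simp add: large_leaves_def)
  moreover have "x' i = x i" if "i \<in> small_leaves n x" for i
    using that j by (auto simp: x'_def small_leaves_def large_leaves_def)
  then have "star_num n p x - ?R * star_den n p x + (\<Sum>i\<in>large_leaves n x. ?G (x' i) - ?G (x i))
      \<le> star_num n p x' - ?R * star_den n p x'"
    by (rule star_num_den_perturb_large_leaves[OF n p x x'])
  moreover have "star_num n p x - ?R * star_den n p x = 0"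
    using star_den_box_ge_one[OF n x, of p] by (simp add: star_ratio_def)
  moreover have "star_num n p x' - ?R * star_den n p x' \<le> 0"
    using maximal[OF x'] star_ratio_le_iff[OF n x'] by blast
  ultimately show ?thesis by linarith
qed

lemma star_maximizer_equalize_large_leaves:
  assumes n: "n \<ge> 1" and p: "p \<ge> 1" and x: "x \<in> star_box n"
    and maximal: "\<And>y. y \<in> star_box n \<Longrightarrow> star_ratio n p y \<le> star_ratio n p x"
  shows "\<exists>x'\<in>star_box n. star_ratio n p x \<le> star_ratio n p x'
    \<and> (\<exists>w. \<forall>i\<in>{2..n}. x' i = w \<or> i \<in> small_leaves n x')"
proof -
  let ?L = "large_leaves n x" and ?R = "star_ratio n p x" and ?G = "leaf_gain n p (star_ratio n p x) x"
  \<comment> \<open>Raising all large leaves to the largest large value (rather than to any maximiser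
    of leaf_gain) cannot lower the mean, so the small leaves stay small.\<close>
  define w where "w = Max (x ` ?L)"
  define x' where "x' i = (if i \<in> ?L then w else x i)" for i
  have L: "finite ?L" "?L \<subseteq> {2..n}" by (auto simp: large_leaves_def)
  have below_w: "x i \<le> w" if "i \<in> ?L" for i
    unfolding w_def using L that by (intro Max_ge) auto
  have w_attained: "\<exists>j\<in>?L. x j = w" if "i \<in> ?L" for i
  proof -
    have "w \<in> x ` ?L" unfolding w_def using L that by (intro Max_in) auto
    then show ?thesis by auto
  qed
  have x': "x' \<in> star_box n"
  proof -
    have "0 \<le> w \<and> w \<le> 1" if "i \<in> ?L" for i
      using w_attained[OF that] L star_box_leaf[OF x] by auto
    then show ?thesis using x L by (auto simp: star_box_def x'_def)
  qed
  have "0 \<le> (\<Sum>i\<in>?L. ?G (x' i) - ?G (x i))"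
  proof (rule sum_nonneg)
    fix i assume i: "i \<in> ?L"
    then obtain j where "j \<in> ?L" "x j = w" using w_attained by blast
    moreover have "0 \<le> x i" "x i \<le> 1" using star_box_leaf[OF x] i L by auto
    ultimately have "?G (x i) \<le> ?G w"
      using leaf_gain_max_at_large_leaf[OF n p x maximal] by metis
    then show "0 \<le> ?G (x' i) - ?G (x i)" using i by (simp add: x'_def)
  qed
  moreover have "star_num n p x - ?R * star_den n p x + (\<Sum>i\<in>?L. ?G (x' i) - ?G (x i))
      \<le> star_num n p x' - ?R * star_den n p x'"
    by (rule star_num_den_perturb_large_leaves[OF n p x x'])
      (auto simp: x'_def small_leaves_def large_leaves_def)
  moreover have "star_num n p x - ?R * star_den n p x = 0"
    using star_den_box_ge_one[OF n x, of p] by (simp add: star_ratio_def)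
  ultimately have "?R \<le> star_ratio n p x'"
    using star_ratio_ge_iff[OF n x', where R = ?R and p = p] by linarith
  moreover have "\<forall>i\<in>{2..n}. x' i = w \<or> i \<in> small_leaves n x'"
  proof
    fix i assume i: "i \<in> {2..n}"
    have "(\<Sum>i=2..n. x i) \<le> (\<Sum>i=2..n. x' i)"
      using below_w by (intro sum_mono) (simp add: x'_def)
    then have "star_mean n x \<le> star_mean n x'"
      unfolding star_mean_box[OF n x] star_mean_box[OF n x'] by (simp add: divide_right_mono)
    then show "x' i = w \<or> i \<in> small_leaves n x'"
      using i by (auto simp: x'_def small_leaves_def large_leaves_def)
  qed
  ultimately show ?thesis using x' by blast
qed

lemma star_ratio_le_average_small_leaves:
  assumes n: "n \<ge> 1" and p: "p \<ge> 1" and x: "x \<in> star_box n"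
  shows "\<exists>z. (\<lambda>i. if i \<in> small_leaves n x then z else x i) \<in> star_box n
    \<and> star_ratio n p x \<le> star_ratio n p (\<lambda>i. if i \<in> small_leaves n x then z else x i)"
proof -
  let ?S = "small_leaves n x" and ?L = "large_leaves n x"
  define z where "z = (\<Sum>i\<in>?S. x i) / real (card ?S)"
  define x' where "x' i = (if i \<in> ?S then z else x i)" for i
  have S: "finite ?S" "?S \<subseteq> {2..n}" by (auto simp: small_leaves_def)
  have x_S: "0 \<le> x i \<and> x i \<le> 1" if "i \<in> ?S" for i
    using star_box_leaf[OF x] S that by auto
  have x': "x' \<in> star_box n"
  proof -
    have "0 \<le> z \<and> z \<le> 1" if "i \<in> ?S" for i
    proof -
      have "card ?S > 0" using S that by (auto simp: card_gt_0_iff)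
      moreover have "0 \<le> (\<Sum>i\<in>?S. x i)"
        using x_S by (intro sum_nonneg) auto
      moreover have "(\<Sum>i\<in>?S. x i) \<le> (\<Sum>i\<in>?S. 1)"
        using x_S by (intro sum_mono) auto
      ultimately show ?thesis by (simp add: z_def divide_le_eq)
    qed
    then show ?thesis using x S by (auto simp: star_box_def x'_def)
  qed
  have mean_S: "(\<Sum>i\<in>?S. x' i) = (\<Sum>i\<in>?S. x i)"
    using S(1) by (cases "?S = {}") (simp_all add: x'_def z_def)
  have "star_mean n x' = star_mean n x"
    unfolding star_mean_box[OF n x] star_mean_box[OF n x'] sum_leaves_split[where x = x] mean_S
    by (simp add: x'_def large_leaves_def small_leaves_def)
  then have "star_num n p x \<le> star_num n p x'"
    unfolding star_num_box[OF n x] star_num_box[OF n x']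
    using star_mean_box_bounds[OF n x] p
    by (intro add_left_mono sum_mono powr_mono2) (auto simp: x'_def small_leaves_def max_def)
  moreover have "star_den n p x' \<le> star_den n p x"
  proof -
    have "(\<Sum>i\<in>?S. x' i powr p) = real (card ?S) * z powr p" by (simp add: x'_def)
    also have "\<dots> \<le> (\<Sum>i\<in>?S. x i powr p)"
      unfolding z_def using S(1) x_S p by (intro card_mult_powr_mean_le_sum_powr) auto
    finally show ?thesis
      unfolding star_den_box[OF n x] star_den_box[OF n x'] sum_leaves_split[where x = x]
      by (simp add: x'_def large_leaves_def small_leaves_def)
  qed
  ultimately have "star_ratio n p x \<le> star_ratio n p x'"
    unfolding star_ratio_def using star_den_box_ge_one[OF n x', of p]
    by (intro frac_le star_num_nonneg) auto
  then show ?thesis using x' unfolding x'_def by blast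
qed

lemma star_ratio_two_valued_maximizer:
  assumes n: "n \<ge> 1" and p: "p \<ge> 1"
  shows "\<exists>x\<in>star_box n. (\<forall>f. (\<exists>v\<in>star_V n. f v \<noteq> 0) \<longrightarrow> star_ratio n p f \<le> star_ratio n p x)
    \<and> (\<exists>z w. \<forall>i\<in>{2..n}. x i \<in> {z, w})"
proof -
  have "(\<lambda>i. if i = 1 then 1 else 0) \<in> star_box n" using n by (simp add: star_box_def)
  then have "star_box n \<noteq> {}" by blast
  moreover have p0: "p > 0" using p by simp
  ultimately obtain x0 where x0: "x0 \<in> star_box n"
    and maximal: "\<And>y. y \<in> star_box n \<Longrightarrow> star_ratio n p y \<le> star_ratio n p x0"
    using continuous_attains_sup[OF compact_star_box[OF n] _ continuous_on_star_ratio[OF n]] by blast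
  obtain x1 w where x1: "x1 \<in> star_box n" "star_ratio n p x0 \<le> star_ratio n p x1"
    and w: "\<And>i. i \<in> {2..n} \<Longrightarrow> x1 i = w \<or> i \<in> small_leaves n x1"
    using star_maximizer_equalize_large_leaves[OF n p x0 maximal] by blast
  obtain z where x2: "(\<lambda>i. if i \<in> small_leaves n x1 then z else x1 i) \<in> star_box n"
    "star_ratio n p x1 \<le> star_ratio n p (\<lambda>i. if i \<in> small_leaves n x1 then z else x1 i)"
    using star_ratio_le_average_small_leaves[OF n p x1(1)] by blast
  have "star_ratio n p f \<le> star_ratio n p (\<lambda>i. if i \<in> small_leaves n x1 then z else x1 i)"
    if nonzero: "\<exists>v\<in>star_V n. f v \<noteq> 0" for f
  proof -
    obtain y where "y \<in> star_box n" "star_ratio n p f \<le> star_ratio n p y"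
      using star_ratio_le_box[OF n p0 nonzero] by blast
    then show ?thesis using maximal x1(2) x2(2) by (meson order_trans)
  qed
  moreover have "\<forall>i\<in>{2..n}. (if i \<in> small_leaves n x1 then z else x1 i) \<in> {z, w}"
    by (auto dest: w)
  ultimately show ?thesis using x2(1) by blast
qed

theorem proposition2p3:
  fixes n :: nat and p :: real
  assumes "n \<ge> 1" and "p \<ge> 1"
  shows "\<exists>f :: nat \<Rightarrow> real.
           (\<exists>v \<in> star_V n. f v \<noteq> 0) \<and>
           pnorm (star_V n) p (maximal_op (star_V n) (star_E n) f) / pnorm (star_V n) p f
             = maximal_op_norm (star_V n) (star_E n) p \<and>
           f 1 = Max (f ` star_V n) \<and>
           card (f ` (star_V n - {1})) \<le> 2"
proof -
  have p: "p > 0" using assms(2) by simp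
  obtain x z w where x: "x \<in> star_box n"
    and maximal: "\<And>f. \<exists>v\<in>star_V n. f v \<noteq> 0 \<Longrightarrow> star_ratio n p f \<le> star_ratio n p x"
    and two_valued: "\<And>i. i \<in> {2..n} \<Longrightarrow> x i \<in> {z, w}"
    using star_ratio_two_valued_maximizer[OF assms] by blast
  have center: "x 1 = 1" "1 \<in> star_V n" using x assms(1) by (simp_all add: star_box_def star_V_def)
  then have nonzero: "\<exists>v\<in>star_V n. x v \<noteq> 0" by force
  have "star_ratio n p f powr (1 / p) \<le> star_ratio n p x powr (1 / p)"
    if "\<exists>v\<in>star_V n. f v \<noteq> 0" for f
    using maximal[OF that] p star_ratio_nonneg by (intro powr_mono2) auto
  then have norm: "maximal_op_norm (star_V n) (star_E n) p
      = pnorm (star_V n) p (maximal_op (star_V n) (star_E n) x) / pnorm (star_V n) p x"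
    using nonzero by (intro maximal_op_norm_eqI) (simp_all add: pnorm_ratio_star[OF assms(1) p])
  have "x i \<le> x 1" if "i \<in> star_V n" for i
    using that center star_box_leaf[OF x, of i] by (cases "i = 1") (auto simp: star_V_def)
  then have center_max: "x 1 = Max (x ` star_V n)"
    using center by (intro Max_eqI[symmetric]) (auto simp: star_V_def)
  have "star_V n - {1} = {2..n}" by (auto simp: star_V_def)
  then have "x ` (star_V n - {1}) \<subseteq> {z, w}" using two_valued by blast
  then have "card (x ` (star_V n - {1})) \<le> card {z, w}" by (intro card_mono) auto
  moreover have "card {z, w} \<le> 2" by (cases "z = w") auto
  ultimately have "card (x ` (star_V n - {1})) \<le> 2" by linarith
  with nonzero norm center_max show ?thesis by metis
qed

end
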